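(* Let $E$, $D$, $S$ be binary random variables taking values in $\{0,1\}$ such that every joint cell probability $P(E=e,D=d,S=s)$ is positive, and write $p(d,e)=P(S=1\mid D=d,E=e)$. Suppose there is no interaction of $E$ and $D$ on $S$ on the odds ratio scale, i.e. $\mathrm{OR}_{ES\mid D=1}=\mathrm{OR}_{ES\mid D=0}$. (a) If $p(d,e)$ is non-decreasing in both $d$ and $e$, or non-increasing in both $d$ and $e$, then $\mathrm{OR}_{ED\mid S=1}\le \mathrm{OR}_{ED}$. (b) If $p(d,e)$ is non-decreasing in one of $d,e$ and non-increasing in the other, then $\mathrm{OR}_{ED\mid S=1}\ge \mathrm{OR}_{ED}$.
   Context: For binary random variables $A,B$ and a random variable $C$, $\mathrm{OR}_{AB\mid C=c}=\frac{P(A=1,B=1\mid C=c)P(A=0,B=0\mid C=c)}{P(A=1,B=0\mid C=c)P(A=0,B=1\mid C=c)}$, and $\mathrm{OR}_{AB}$ is the unconditional version. "Non-decreasing in $d$" means $p(1,e)\ge p(0,e)$ for each $e\in\{0,1\}$; "non-decreasing in $e$" means $p(d,1)\ge p(d,0)$ for each $d\in\{0,1\}$; non-increasing analogously. *)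

theory Defs
  imports Complex_Main
begin

text \<open>A joint distribution of three binary random variables E, D, S with values in {0,1}
  is given by its cell probabilities  q e d s = P(E=e, D=d, S=s).\<close>

definition joint_dist3 :: "(nat \<Rightarrow> nat \<Rightarrow> nat \<Rightarrow> real) \<Rightarrow> bool" where
  "joint_dist3 q \<longleftrightarrow>
     (\<forall>e\<in>{0,1}. \<forall>d\<in>{0,1}. \<forall>s\<in>{0,1}. q e d s \<ge> 0) \<and>
     (\<Sum>e\<in>{0::nat,1}. \<Sum>d\<in>{0::nat,1}. \<Sum>s\<in>{0::nat,1}. q e d s) = 1"

definition odds_ratio :: "(nat \<Rightarrow> nat \<Rightarrow> real) \<Rightarrow> real" where
  "odds_ratio f = (f 1 1 * f 0 0) / (f 1 0 * f 0 1)"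

definition PD :: "(nat \<Rightarrow> nat \<Rightarrow> nat \<Rightarrow> real) \<Rightarrow> nat \<Rightarrow> real" where
  "PD q d = (\<Sum>e\<in>{0::nat,1}. \<Sum>s\<in>{0::nat,1}. q e d s)"

definition PS :: "(nat \<Rightarrow> nat \<Rightarrow> nat \<Rightarrow> real) \<Rightarrow> nat \<Rightarrow> real" where
  "PS q s = (\<Sum>e\<in>{0::nat,1}. \<Sum>d\<in>{0::nat,1}. q e d s)"

definition OR_ES_given_D :: "(nat \<Rightarrow> nat \<Rightarrow> nat \<Rightarrow> real) \<Rightarrow> nat \<Rightarrow> real" where
  "OR_ES_given_D q d = odds_ratio (\<lambda>e s. q e d s / PD q d)"

definition OR_ED_given_S :: "(nat \<Rightarrow> nat \<Rightarrow> nat \<Rightarrow> real) \<Rightarrow> nat \<Rightarrow> real" where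
  "OR_ED_given_S q s = odds_ratio (\<lambda>e d. q e d s / PS q s)"

definition OR_ED :: "(nat \<Rightarrow> nat \<Rightarrow> nat \<Rightarrow> real) \<Rightarrow> real" where
  "OR_ED q = odds_ratio (\<lambda>e d. q e d 0 + q e d 1)"

definition pS :: "(nat \<Rightarrow> nat \<Rightarrow> nat \<Rightarrow> real) \<Rightarrow> nat \<Rightarrow> nat \<Rightarrow> real" where
  "pS q d e = q e d 1 / (q e d 0 + q e d 1)"

definition nondec_d :: "(nat \<Rightarrow> nat \<Rightarrow> real) \<Rightarrow> bool" where
  "nondec_d p \<longleftrightarrow> (\<forall>e\<in>{0,1}. p 1 e \<ge> p 0 e)"
definition nondec_e :: "(nat \<Rightarrow> nat \<Rightarrow> real) \<Rightarrow> bool" where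
  "nondec_e p \<longleftrightarrow> (\<forall>d\<in>{0,1}. p d 1 \<ge> p d 0)"
definition noninc_d :: "(nat \<Rightarrow> nat \<Rightarrow> real) \<Rightarrow> bool" where
  "noninc_d p \<longleftrightarrow> (\<forall>e\<in>{0,1}. p 1 e \<le> p 0 e)"
definition noninc_e :: "(nat \<Rightarrow> nat \<Rightarrow> real) \<Rightarrow> bool" where
  "noninc_e p \<longleftrightarrow> (\<forall>d\<in>{0,1}. p d 1 \<le> p d 0)"

end

theory Submission
  imports Defs
begin

text \<open>Write \<open>o(d,e)\<close> for the odds of \<open>S = 1\<close> given \<open>D = d, E = e\<close>. Odds ratios are multiplicative
  in the cells and \<open>P(E,D,S=1) = o \<cdot> P(E,D,S=0)\<close>, so no interaction (the table \<open>o\<close> has odds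
  ratio 1) gives \<open>OR_{ED|S=1} = OR_{ED|S=0}\<close>, while \<open>OR_ED = OR(1 + o) \<cdot> OR_{ED|S=0}\<close>. Because
  \<open>o\<^sub>11 o\<^sub>00 = o\<^sub>10 o\<^sub>01\<close>, \<open>OR(1 + o) \<ge> 1\<close> iff \<open>o\<^sub>10 + o\<^sub>01 \<le> o\<^sub>11 + o\<^sub>00\<close>. Since \<open>p = o/(1 + o)\<close>,
  the monotonicity hypotheses say where the largest odds sits: on the diagonal in case (a),
  off the diagonal in case (b); and if \<open>a d = b c\<close> with \<open>a\<close> the largest, then
  \<open>a (a + d - b - c) = (a - b)(a - c) \<ge> 0\<close>.\<close>

definition odds :: "(nat \<Rightarrow> nat \<Rightarrow> nat \<Rightarrow> real) \<Rightarrow> nat \<Rightarrow> nat \<Rightarrow> real" where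
  "odds q d e = q e d 1 / q e d 0"

lemma add_le_add_if_mult_eq_and_max:
  fixes a b c d :: real
  assumes "a * d = b * c" and "b \<le> a" and "c \<le> a" and "0 < a"
  shows "b + c \<le> a + d"
proof -
  have "0 \<le> (a - b) * (a - c)" using assms(2,3) by simp
  also have "\<dots> = a * (a + d - b - c)" using assms(1) by (simp add: algebra_simps)
  finally show ?thesis using assms(4) by (simp add: zero_le_mult_iff)
qed

lemma odds_ratio_mult: "odds_ratio (\<lambda>a b. f a b * g a b) = odds_ratio f * odds_ratio g"
  by (simp add: odds_ratio_def ac_simps)

lemma odds_ratio_divide_const:
  assumes "c \<noteq> 0"
  shows "odds_ratio (\<lambda>a b. f a b / c) = odds_ratio f"
  using assms by (simp add: odds_ratio_def)

lemma odds_ratio_transpose: "odds_ratio (\<lambda>a b. f b a) = odds_ratio f"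
  by (simp add: odds_ratio_def ac_simps)

lemma odds_ratio_add_one_eq:
  fixes p :: "nat \<Rightarrow> nat \<Rightarrow> real"
  assumes "p 1 1 * p 0 0 = p 1 0 * p 0 1"
  shows "odds_ratio (\<lambda>a b. 1 + p a b)
           = (1 + (p 1 1 + p 0 0) + p 1 0 * p 0 1) / (1 + (p 1 0 + p 0 1) + p 1 0 * p 0 1)"
  using assms by (simp add: odds_ratio_def algebra_simps)

lemma one_le_odds_ratio_add_one_if_concordant:
  fixes p :: "nat \<Rightarrow> nat \<Rightarrow> real"
  assumes pos: "\<forall>d\<in>{0,1}. \<forall>e\<in>{0,1}. p d e > 0"
    and cross: "p 1 1 * p 0 0 = p 1 0 * p 0 1"
    and "(nondec_d p \<and> nondec_e p) \<or> (noninc_d p \<and> noninc_e p)"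
  shows "1 \<le> odds_ratio (\<lambda>a b. 1 + p a b)"
proof -
  have "p 1 0 + p 0 1 \<le> p 1 1 + p 0 0"
    using assms(3) pos add_le_add_if_mult_eq_and_max[OF cross]
      add_le_add_if_mult_eq_and_max[of "p 0 0" "p 1 1" "p 1 0" "p 0 1"] cross
    by (auto simp: nondec_d_def nondec_e_def noninc_d_def noninc_e_def ac_simps)
  moreover have "0 < 1 + (p 1 0 + p 0 1) + p 1 0 * p 0 1" using pos by (simp add: add_pos_pos)
  ultimately show ?thesis by (simp add: odds_ratio_add_one_eq[OF cross])
qed

lemma odds_ratio_add_one_le_one_if_discordant:
  fixes p :: "nat \<Rightarrow> nat \<Rightarrow> real"
  assumes pos: "\<forall>d\<in>{0,1}. \<forall>e\<in>{0,1}. p d e > 0"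
    and cross: "p 1 1 * p 0 0 = p 1 0 * p 0 1"
    and "(nondec_d p \<and> noninc_e p) \<or> (noninc_d p \<and> nondec_e p)"
  shows "odds_ratio (\<lambda>a b. 1 + p a b) \<le> 1"
proof -
  have "p 1 1 + p 0 0 \<le> p 1 0 + p 0 1"
    using assms(3) pos cross
      add_le_add_if_mult_eq_and_max[of "p 1 0" "p 0 1" "p 1 1" "p 0 0"]
      add_le_add_if_mult_eq_and_max[of "p 0 1" "p 1 0" "p 1 1" "p 0 0"]
    by (auto simp: nondec_d_def nondec_e_def noninc_d_def noninc_e_def ac_simps)
  moreover have "0 < 1 + (p 1 0 + p 0 1) + p 1 0 * p 0 1" using pos by (simp add: add_pos_pos)
  ultimately show ?thesis by (simp add: odds_ratio_add_one_eq[OF cross])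
qed

lemma pS_le_pS_iff_odds_le:
  assumes "0 < q e d 0" "0 < q e d 1" "0 < q e' d' 0" "0 < q e' d' 1"
  shows "pS q d e \<le> pS q d' e' \<longleftrightarrow> odds q d e \<le> odds q d' e'"
proof -
  have "pS q d e \<le> pS q d' e' \<longleftrightarrow> q e d 1 * q e' d' 0 \<le> q e' d' 1 * q e d 0"
    using assms by (simp add: pS_def divide_simps algebra_simps)
  also have "\<dots> \<longleftrightarrow> odds q d e \<le> odds q d' e'"
    using assms by (simp add: odds_def divide_simps)
  finally show ?thesis .
qed

lemma monotone_pS_iff_monotone_odds:
  assumes pos: "\<forall>e\<in>{0,1}. \<forall>d\<in>{0,1}. \<forall>s\<in>{0,1}. q e d s > 0"
  shows "nondec_d (pS q) \<longleftrightarrow> nondec_d (odds q)" "nondec_e (pS q) \<longleftrightarrow> nondec_e (odds q)"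
    and "noninc_d (pS q) \<longleftrightarrow> noninc_d (odds q)" "noninc_e (pS q) \<longleftrightarrow> noninc_e (odds q)"
  using pos by (auto simp: nondec_d_def nondec_e_def noninc_d_def noninc_e_def pS_le_pS_iff_odds_le)

lemma odds_pos:
  assumes "\<forall>e\<in>{0,1}. \<forall>d\<in>{0,1}. \<forall>s\<in>{0,1}. q e d s > 0"
  shows "\<forall>d\<in>{0,1}. \<forall>e\<in>{0,1}. odds q d e > 0"
  using assms by (simp add: odds_def)

lemma OR_ES_given_D_eq:
  assumes "\<forall>e\<in>{0,1}. \<forall>s\<in>{0,1}. q e d s > 0"
  shows "OR_ES_given_D q d = odds q d 1 / odds q d 0"
proof -
  have "PD q d \<noteq> 0" using assms by (simp add: PD_def add_pos_pos)
  then show ?thesis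
    using assms by (simp add: OR_ES_given_D_def odds_ratio_divide_const odds_ratio_def odds_def)
qed

lemma odds_cross_product_eq_if_no_interaction:
  assumes pos: "\<forall>e\<in>{0,1}. \<forall>d\<in>{0,1}. \<forall>s\<in>{0,1}. q e d s > 0"
    and "OR_ES_given_D q 1 = OR_ES_given_D q 0"
  shows "odds q 1 1 * odds q 0 0 = odds q 1 0 * odds q 0 1"
proof -
  have "odds q 1 1 / odds q 1 0 = odds q 0 1 / odds q 0 0"
    using assms by (simp add: OR_ES_given_D_eq)
  then show ?thesis using odds_pos[OF pos] by (simp add: divide_simps)
qed

lemma odds_ratio_cells_via_odds:
  assumes "\<forall>e\<in>{0,1}. \<forall>d\<in>{0,1}. \<forall>s\<in>{0,1}. q e d s > 0"
  shows "odds_ratio (\<lambda>e d. q e d 1) = odds_ratio (\<lambda>e d. odds q d e * q e d 0)"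
    and "odds_ratio (\<lambda>e d. q e d 0 + q e d 1) = odds_ratio (\<lambda>e d. (1 + odds q d e) * q e d 0)"
  using assms by (simp_all add: odds_ratio_def odds_def algebra_simps)

lemma OR_ED_given_S_one_eq:
  assumes pos: "\<forall>e\<in>{0,1}. \<forall>d\<in>{0,1}. \<forall>s\<in>{0,1}. q e d s > 0"
  shows "OR_ED_given_S q 1 = odds_ratio (odds q) * odds_ratio (\<lambda>e d. q e d 0)"
proof -
  have "PS q 1 \<noteq> 0" using pos by (simp add: PS_def add_pos_pos)
  then have "OR_ED_given_S q 1 = odds_ratio (\<lambda>e d. q e d 1)"
    by (simp add: OR_ED_given_S_def odds_ratio_divide_const)
  also have "\<dots> = odds_ratio (\<lambda>e d. odds q d e * q e d 0)"
    using odds_ratio_cells_via_odds[OF pos] by simp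
  finally show ?thesis by (simp only: odds_ratio_mult odds_ratio_transpose[of "odds q"])
qed

lemma OR_ED_eq:
  assumes "\<forall>e\<in>{0,1}. \<forall>d\<in>{0,1}. \<forall>s\<in>{0,1}. q e d s > 0"
  shows "OR_ED q = odds_ratio (\<lambda>d e. 1 + odds q d e) * odds_ratio (\<lambda>e d. q e d 0)"
proof -
  have "OR_ED q = odds_ratio (\<lambda>e d. (1 + odds q d e) * q e d 0)"
    using odds_ratio_cells_via_odds[OF assms] by (simp add: OR_ED_def)
  then show ?thesis by (simp only: odds_ratio_mult odds_ratio_transpose[of "\<lambda>d e. 1 + odds q d e"])
qed

theorem mainTheorem2:
  fixes q :: "nat \<Rightarrow> nat \<Rightarrow> nat \<Rightarrow> real"
  assumes dist: "joint_dist3 q"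
    and pos: "\<forall>e\<in>{0,1}. \<forall>d\<in>{0,1}. \<forall>s\<in>{0,1}. q e d s > 0"
    and noint: "OR_ES_given_D q 1 = OR_ES_given_D q 0"
  shows "((nondec_d (pS q) \<and> nondec_e (pS q)) \<or> (noninc_d (pS q) \<and> noninc_e (pS q))
            \<longrightarrow> OR_ED_given_S q 1 \<le> OR_ED q)
       \<and> ((nondec_d (pS q) \<and> noninc_e (pS q)) \<or> (noninc_d (pS q) \<and> nondec_e (pS q))
            \<longrightarrow> OR_ED_given_S q 1 \<ge> OR_ED q)"
proof -
  define R0 where "R0 = odds_ratio (\<lambda>e d. q e d 0)"
  define A where "A = odds_ratio (\<lambda>d e. 1 + odds q d e)"
  have cross: "odds q 1 1 * odds q 0 0 = odds q 1 0 * odds q 0 1"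
    using odds_cross_product_eq_if_no_interaction[OF pos noint] .
  have "odds_ratio (odds q) = 1"
    using cross odds_pos[OF pos] by (simp add: odds_ratio_def)
  then have S1: "OR_ED_given_S q 1 = R0" and S: "OR_ED q = A * R0"
    using OR_ED_given_S_one_eq[OF pos] OR_ED_eq[OF pos] by (simp_all add: R0_def A_def)
  have "R0 > 0" using pos by (simp add: R0_def odds_ratio_def)
  then show ?thesis
    unfolding S1 S monotone_pS_iff_monotone_odds[OF pos] A_def
    using one_le_odds_ratio_add_one_if_concordant[OF odds_pos[OF pos] cross]
      odds_ratio_add_one_le_one_if_discordant[OF odds_pos[OF pos] cross]
    by (simp add: mult_le_cancel_right2 mult_le_cancel_right1)
qed

end
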